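(* Let $\lambda$ and $g$ be as in the context and let $j\ge0$ be an integer. Then \[ \left[(-\lambda)g\right]^{j}\circ g(x)=g\!\left((-\lambda)^{j}x\right) \] for all $x$ with $-\lambda^{-j}\le x\le\lambda^{-j}$, where $\left[(-\lambda)g\right]^{j}$ is the $j$-fold composition of the map $x\mapsto(-\lambda)g(x)$.
   Context: There is a unique constant $\lambda=2.5029\ldots$ and a unique infinitely (period-doubling) renormalizable analytic unimodal map $g:[-1,1]\to[-1,1]$ solving $g(x)=-\lambda\, g^{2}(-x/\lambda)$ for $-1\le x\le1$ ($g^2=g\circ g$). Unimodal means: $-1$ is the unique fixed point with positive multiplier, $g(1)=-1$, and $g$ has a unique maximum at an interior nondegenerate critical point. Moreover $g$ is analytic near $[-1,1]$ and even. *)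

theory Defs
  imports "HOL-Analysis.Analysis"
begin

definition analytic_near_interval :: "(real \<Rightarrow> real) \<Rightarrow> bool" where
  "analytic_near_interval g \<longleftrightarrow>
     (\<exists>U G. open U \<and> complex_of_real ` {-1..1} \<subseteq> U \<and> G holomorphic_on U \<and>
        (\<forall>x. complex_of_real x \<in> U \<longrightarrow> G (complex_of_real x) = complex_of_real (g x)))"

definition unimodal :: "(real \<Rightarrow> real) \<Rightarrow> bool" where
  "unimodal g \<longleftrightarrow>
     (\<forall>x\<in>{-1..1}. g x \<in> {-1..1}) \<and>
     g (-1) = -1 \<and> deriv g (-1) > 0 \<and>
     (\<forall>x\<in>{-1..1}. g x = x \<and> deriv g x > 0 \<longrightarrow> x = -1) \<and>
     g 1 = -1 \<and>
     (\<exists>c\<in>{-1<..<1}. (\<forall>x\<in>{-1..1}. x \<noteq> c \<longrightarrow> g x < g c) \<and>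
        deriv g c = 0 \<and> deriv (deriv g) c \<noteq> 0)"

definition feigenbaum_pair :: "real \<Rightarrow> (real \<Rightarrow> real) \<Rightarrow> bool" where
  "feigenbaum_pair lam g \<longleftrightarrow>
     2.5029 \<le> lam \<and> lam < 2.503 \<and>
     (\<forall>x\<in>{-1..1}. g x = - lam * g (g (- x / lam))) \<and>
     unimodal g \<and> analytic_near_interval g \<and>
     (\<forall>x\<in>{-1..1}. g (-x) = g x)"

end

theory Submission
  imports Defs
begin

text \<open>Induction on \<open>j\<close>: applying the renormalization equation at the point \<open>(-\<lambda>)\<^sup>j\<^sup>+\<^sup>1 x\<close>,
which lies in \<open>[-1,1]\<close>, gives \<open>g((-\<lambda>)\<^sup>j\<^sup>+\<^sup>1 x) = (-\<lambda>) g(g((-\<lambda>)\<^sup>j x))\<close>, and the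
induction hypothesis rewrites the inner term.\<close>

lemma renormalization_iterate:
  fixes lam :: real and g :: "real \<Rightarrow> real"
  assumes lam: "lam \<ge> 1"
    and renorm: "\<And>y. y \<in> {-1..1} \<Longrightarrow> g y = - lam * g (g (- y / lam))"
    and x: "\<bar>x\<bar> * lam ^ j \<le> 1"
  shows "((\<lambda>y. (- lam) * g y) ^^ j) (g x) = g ((- lam) ^ j * x)"
  using x
proof (induction j)
  case 0
  then show ?case by simp
next
  case (Suc j)
  have "\<bar>x\<bar> * lam ^ j \<le> \<bar>x\<bar> * lam ^ Suc j"
    using lam by (intro mult_left_mono) auto
  with Suc.prems have IH: "((\<lambda>y. (- lam) * g y) ^^ j) (g x) = g ((- lam) ^ j * x)"
    by (intro Suc.IH) linarith
  have "\<bar>(- lam) ^ Suc j * x\<bar> = \<bar>x\<bar> * lam ^ Suc j"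
    using lam by (simp add: abs_mult power_abs)
  with Suc.prems have "(- lam) ^ Suc j * x \<in> {-1..1}"
    by auto
  moreover have "- ((- lam) ^ Suc j * x) / lam = (- lam) ^ j * x"
    using lam by simp
  ultimately show ?case
    using renorm IH by simp
qed

theorem mainTheorem8:
  fixes lam :: real and g :: "real \<Rightarrow> real" and j :: nat and x :: real
  assumes "feigenbaum_pair lam g"
    and "- (1 / lam ^ j) \<le> x" and "x \<le> 1 / lam ^ j"
  shows "((\<lambda>y. (- lam) * g y) ^^ j) (g x) = g ((- lam) ^ j * x)"
proof (rule renormalization_iterate)
  show lam: "lam \<ge> 1"
    using assms(1) unfolding feigenbaum_pair_def by auto
  show "\<And>y. y \<in> {-1..1} \<Longrightarrow> g y = - lam * g (g (- y / lam))"
    using assms(1) unfolding feigenbaum_pair_def by auto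
  have "\<bar>x\<bar> \<le> 1 / lam ^ j"
    using assms(2,3) by auto
  then show "\<bar>x\<bar> * lam ^ j \<le> 1"
    using lam by (simp add: field_simps)
qed

end
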